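(* Let $G$ be a graph with $n$ vertices and at least one edge, and let $\Delta$ be its maximum vertex degree. Then $$EE(G) > e^{\sqrt{\Delta}} + (n-1) - \sqrt{\Delta}.$$
   Context: All graphs are finite, simple and undirected. For a graph $G$ with adjacency matrix $A(G)$ having eigenvalues $\lambda_1\ge\cdots\ge\lambda_n$, the Estrada index is $EE(G)=\sum_{i=1}^n e^{\lambda_i}$. *)

theory Defs
  imports "Jordan_Normal_Form.Char_Poly" "HOL-Computational_Algebra.Polynomial"
begin

text \<open>A finite simple graph on the vertex set {0..<n}, given by an edge relation E
  that is symmetric and irreflexive (only its restriction to {0..<n} matters).\<close>
definition simple_graph :: "nat \<Rightarrow> (nat \<Rightarrow> nat \<Rightarrow> bool) \<Rightarrow> bool" where
  "simple_graph n E \<longleftrightarrow> (\<forall>i<n. \<forall>j<n. E i j \<longleftrightarrow> E j i) \<and> (\<forall>i<n. \<not> E i i)"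

definition adj_matrix :: "nat \<Rightarrow> (nat \<Rightarrow> nat \<Rightarrow> bool) \<Rightarrow> real mat" where
  "adj_matrix n E = mat n n (\<lambda>(i, j). if E i j then 1 else 0)"

definition degree_of :: "nat \<Rightarrow> (nat \<Rightarrow> nat \<Rightarrow> bool) \<Rightarrow> nat \<Rightarrow> nat" where
  "degree_of n E i = card {j. j < n \<and> E i j}"

definition max_degree :: "nat \<Rightarrow> (nat \<Rightarrow> nat \<Rightarrow> bool) \<Rightarrow> nat" where
  "max_degree n E = Max {degree_of n E i | i. i < n}"

text \<open>Eigenvalues of A(G) with multiplicity = roots (over C) of the characteristic
  polynomial with multiplicity; the Estrada index is the sum of exp over them
  (the sum is real since A(G) is real symmetric; we take the real part).\<close>
definition adj_eigenvalues :: "nat \<Rightarrow> (nat \<Rightarrow> nat \<Rightarrow> bool) \<Rightarrow> complex multiset" where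
  "adj_eigenvalues n E = proots (char_poly (map_mat complex_of_real (adj_matrix n E)))"

definition estrada_index :: "nat \<Rightarrow> (nat \<Rightarrow> nat \<Rightarrow> bool) \<Rightarrow> real" where
  "estrada_index n E = Re (\<Sum>z\<in>#adj_eigenvalues n E. exp z)"

end

theory Submission
  imports Defs "Jordan_Normal_Form.Schur_Decomposition"
begin

(* By Schur triangularisation tr(A^k) is the k-th power sum of the eigenvalues, so
   EE(G) = sum_k tr(A^k)/k!, where every trace is nonnegative and tr(A^0) = n.
   If v has degree d, repeating the closed walks v -> w -> v gives (A^(2j))_vv >= d^j, and
   stepping to a neighbour w first gives (A^(2j+2))_ww >= d^j; summing over v and its d
   neighbours, tr(A^(2j)) >= 2 d^j for j >= 1. Comparing termwise with the series of
   e^x + e^-x for x = sqrt d gives EE(G) >= e^x + e^-x + n - 2, and e^-x > 1 - x for x > 0. *)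

section \<open>Traces of powers and eigenvalues\<close>

definition trace :: "'a::comm_monoid_add mat \<Rightarrow> 'a" where
  "trace A = (\<Sum>i<dim_row A. A $$ (i, i))"

lemma index_mult_mat_sum:
  assumes "A \<in> carrier_mat n m" "B \<in> carrier_mat m p" "i < n" "j < p"
  shows "(A * B) $$ (i, j) = (\<Sum>k<m. A $$ (i, k) * B $$ (k, j))"
  using assms by (auto simp: scalar_prod_def lessThan_atLeast0 intro!: sum.cong)

lemma trace_mult_comm:
  fixes A B :: "'a::comm_semiring_0 mat"
  assumes A: "A \<in> carrier_mat n m" and B: "B \<in> carrier_mat m n"
  shows "trace (A * B) = trace (B * A)"
proof -
  have "trace (A * B) = (\<Sum>i<n. \<Sum>k<m. A $$ (i, k) * B $$ (k, i))"
    unfolding trace_def using A B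
    by (intro sum.cong) (simp_all del: index_mult_mat(1) add: index_mult_mat_sum[OF A B])
  also have "\<dots> = (\<Sum>k<m. \<Sum>i<n. B $$ (k, i) * A $$ (i, k))"
    by (subst sum.swap) (simp add: mult.commute)
  also have "\<dots> = trace (B * A)"
    unfolding trace_def using A B
    by (intro sum.cong) (simp_all del: index_mult_mat(1) add: index_mult_mat_sum[OF B A])
  finally show ?thesis .
qed

lemma pow_mat_add:
  fixes A :: "'a::semiring_1 mat"
  assumes A: "A \<in> carrier_mat n n"
  shows "A ^\<^sub>m (a + b) = A ^\<^sub>m a * A ^\<^sub>m b"
proof (induction b)
  case 0 show ?case using A by simp
next
  case (Suc b)
  then show ?case using A by (simp add: assoc_mult_mat[of _ n n _ n _ n])
qed

lemma upper_triangular_mult: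
  fixes B C :: "'a::semiring_0 mat"
  assumes B: "B \<in> carrier_mat n n" "upper_triangular B"
    and C: "C \<in> carrier_mat n n" "upper_triangular C"
  shows "upper_triangular (B * C)"
proof
  fix i j assume ji: "j < i" and i: "i < dim_row (B * C)"
  have "B $$ (i, k) * C $$ (k, j) = 0" if k: "k < n" for k
  proof (cases "k < i")
    case True
    then show ?thesis using upper_triangularD[OF B(2) True] i B by simp
  next
    case False
    then have jk: "j < k" using ji by simp
    show ?thesis using upper_triangularD[OF C(2) jk] k C by simp
  qed
  then show "(B * C) $$ (i, j) = 0"
    using i ji B C by (simp del: index_mult_mat(1) add: index_mult_mat_sum[OF B(1) C(1)])
qed

lemma index_mult_upper_triangular_diag:
  fixes B C :: "'a::semiring_0 mat"
  assumes B: "B \<in> carrier_mat n n" "upper_triangular B"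
    and C: "C \<in> carrier_mat n n" "upper_triangular C"
    and i: "i < n"
  shows "(B * C) $$ (i, i) = B $$ (i, i) * C $$ (i, i)"
proof -
  have "B $$ (i, k) * C $$ (k, i) = (if k = i then B $$ (i, i) * C $$ (i, i) else 0)"
    if k: "k < n" for k
  proof (cases k i rule: linorder_cases)
    case less
    then show ?thesis using upper_triangularD[OF B(2) less] i B by simp
  next
    case greater
    then show ?thesis using upper_triangularD[OF C(2) greater] k C by simp
  qed simp
  then have "(\<Sum>k<n. B $$ (i, k) * C $$ (k, i))
      = (\<Sum>k<n. if k = i then B $$ (i, i) * C $$ (i, i) else 0)"
    by (intro sum.cong) auto
  then show ?thesis
    using i by (simp del: index_mult_mat(1) add: index_mult_mat_sum[OF B(1) C(1) i i])
qed

lemma upper_triangular_pow: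
  fixes B :: "'a::semiring_1 mat"
  assumes B: "B \<in> carrier_mat n n" "upper_triangular B"
  shows "upper_triangular (B ^\<^sub>m k)"
proof (induction k)
  case (Suc k)
  then show ?case using B upper_triangular_mult[of "B ^\<^sub>m k" n B] by simp
qed (use B in simp)

lemma index_pow_upper_triangular_diag:
  fixes B :: "'a::comm_semiring_1 mat"
  assumes B: "B \<in> carrier_mat n n" "upper_triangular B" and i: "i < n"
  shows "(B ^\<^sub>m k) $$ (i, i) = B $$ (i, i) ^ k"
proof (induction k)
  case (Suc k)
  then show ?case
    using B i index_mult_upper_triangular_diag[of "B ^\<^sub>m k" n B i] upper_triangular_pow[OF B]
    by (simp del: index_mult_mat(1) add: mult.commute)
qed (use B i in simp)

lemma trace_pow_upper_triangular:
  fixes B :: "'a::comm_semiring_1 mat"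
  assumes B: "B \<in> carrier_mat n n" "upper_triangular B"
  shows "trace (B ^\<^sub>m k) = (\<Sum>a\<leftarrow>diag_mat B. a ^ k)"
  using B by (simp add: trace_def diag_mat_def index_pow_upper_triangular_diag
      sum_list_sum_nth lessThan_atLeast0)

lemma proots_prod_linear_factors:
  "proots (\<Prod>a\<leftarrow>as. [:- a, 1:]) = mset (as :: 'a::idom list)"
proof (induction as)
  case (Cons a as)
  have "(\<Prod>b\<leftarrow>as. [:- b, 1:]) \<noteq> (0 :: 'a poly)"
    by (auto simp: prod_list_zero_iff)
  then have "proots (\<Prod>b\<leftarrow>a # as. [:- b, 1:])
      = proots [:- a, 1:] + proots (\<Prod>b\<leftarrow>as. [:- b, 1:])"
    by (simp only: list.map prod_list.Cons) (rule proots_mult, simp)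
  also have "proots [:- a, 1:] = {#a#}"
    using proots_linear_factor[of "- a"] by simp
  finally show ?case
    using Cons by simp
qed simp

lemma trace_pow_eq_sum_char_poly_roots:
  fixes A :: "'a::conjugatable_ordered_field mat"
  assumes A: "A \<in> carrier_mat n n" and cp: "char_poly A = (\<Prod>a\<leftarrow>as. [:- a, 1:])"
  shows "trace (A ^\<^sub>m k) = (\<Sum>a\<leftarrow>as. a ^ k)"
proof -
  obtain B P Q where "schur_decomposition A as = (B, P, Q)"
    by (cases "schur_decomposition A as") auto
  from schur_decomposition[OF A cp this] have sim: "similar_mat_wit A B P Q"
    and B: "upper_triangular B" "diag_mat B = as" by auto
  note W = similar_mat_witD2[OF A sim]
  have Bk: "B ^\<^sub>m k \<in> carrier_mat n n" using W by simp
  have BkQ: "B ^\<^sub>m k * Q \<in> carrier_mat n n" using Bk W(7) by (rule mult_carrier_mat)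
  have "trace (A ^\<^sub>m k) = trace (P * (B ^\<^sub>m k * Q))"
    using similar_mat_wit_pow_id[OF sim] W Bk by (simp add: assoc_mult_mat[of P n n _ n Q n])
  also have "\<dots> = trace (B ^\<^sub>m k * Q * P)"
    using trace_mult_comm[OF W(6) BkQ] .
  also have "B ^\<^sub>m k * Q * P = B ^\<^sub>m k"
    using W Bk by (simp add: assoc_mult_mat[of _ n n Q n P n])
  finally show ?thesis
    using trace_pow_upper_triangular[OF W(5) B(1)] B(2) by simp
qed

lemma trace_pow_eq_sum_eigenvalues:
  fixes A :: "complex mat"
  assumes A: "A \<in> carrier_mat n n"
  shows "trace (A ^\<^sub>m k) = (\<Sum>z\<in>#proots (char_poly A). z ^ k)"
proof -
  obtain as where cp: "char_poly A = (\<Prod>a\<leftarrow>as. [:- a, 1:])"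
    using char_poly_factorized[OF A] by blast
  show ?thesis
    unfolding trace_pow_eq_sum_char_poly_roots[OF A cp] cp proots_prod_linear_factors
    by (metis mset_map sum_mset_sum_list)
qed

lemma sums_sum_mset:
  fixes f :: "'a \<Rightarrow> nat \<Rightarrow> 'b::real_normed_vector"
  assumes "\<And>x. x \<in># M \<Longrightarrow> f x sums s x"
  shows "(\<lambda>k. \<Sum>x\<in>#M. f x k) sums (\<Sum>x\<in>#M. s x)"
  using assms
proof (induction M)
  case (add x M)
  then have "f x sums s x" and "(\<lambda>k. \<Sum>y\<in>#M. f y k) sums (\<Sum>y\<in>#M. s y)"
    by auto
  from sums_add[OF this] show ?case by simp
qed simp

lemma sums_trace_pow_exp:
  fixes A :: "complex mat"
  assumes A: "A \<in> carrier_mat n n"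
  shows "(\<lambda>k. trace (A ^\<^sub>m k) /\<^sub>R fact k) sums (\<Sum>z\<in>#proots (char_poly A). exp z)"
proof -
  have "(\<lambda>k. \<Sum>z\<in>#proots (char_poly A). z ^ k /\<^sub>R fact k) sums (\<Sum>z\<in>#proots (char_poly A). exp z)"
    by (rule sums_sum_mset) (rule exp_converges)
  moreover have "(\<Sum>z\<in>#M. z ^ k /\<^sub>R fact k) = (\<Sum>z\<in>#M. z ^ k) /\<^sub>R fact k" for M :: "complex multiset" and k
    by (induction M) (simp_all add: scaleR_add_right)
  ultimately show ?thesis
    by (simp add: trace_pow_eq_sum_eigenvalues[OF A])
qed

section \<open>Nonnegative matrices\<close>

definition nonneg_mat :: "'a::{zero, ord} mat \<Rightarrow> bool" where
  "nonneg_mat A \<longleftrightarrow> (\<forall>i<dim_row A. \<forall>j<dim_col A. 0 \<le> A $$ (i, j))"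

lemma nonneg_mat_mult:
  fixes A B :: "'a::linordered_semidom mat"
  assumes "nonneg_mat A" "nonneg_mat B" "A \<in> carrier_mat n m" "B \<in> carrier_mat m p"
  shows "nonneg_mat (A * B)"
  using assms unfolding nonneg_mat_def
  by (auto simp del: index_mult_mat(1) simp add: index_mult_mat_sum intro!: sum_nonneg)

lemma nonneg_mat_pow:
  fixes A :: "'a::linordered_semidom mat"
  assumes "nonneg_mat A" "A \<in> carrier_mat n n"
  shows "nonneg_mat (A ^\<^sub>m k)"
proof (induction k)
  case 0 show ?case by (simp add: nonneg_mat_def one_mat_def)
next
  case (Suc k) then show ?case using assms by (simp add: nonneg_mat_mult[of _ _ n n])
qed

lemma index_mult_mat_ge_term:
  fixes A B :: "'a::linordered_semidom mat"
  assumes "nonneg_mat A" "nonneg_mat B" "A \<in> carrier_mat n m" "B \<in> carrier_mat m p"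
    and "i < n" "l < m" "j < p"
  shows "A $$ (i, l) * B $$ (l, j) \<le> (A * B) $$ (i, j)"
  using assms unfolding nonneg_mat_def
  by (simp del: index_mult_mat(1) add: index_mult_mat_sum)
    (rule member_le_sum[where f = "\<lambda>k. A $$ (i, k) * B $$ (k, j)"], auto)

lemma index_pow_add_ge:
  fixes A :: "'a::linordered_semidom mat"
  assumes "nonneg_mat A" "A \<in> carrier_mat n n" "i < n" "l < n" "j < n"
  shows "(A ^\<^sub>m a) $$ (i, l) * (A ^\<^sub>m b) $$ (l, j) \<le> (A ^\<^sub>m (a + b)) $$ (i, j)"
  unfolding pow_mat_add[OF assms(2)]
  by (rule index_mult_mat_ge_term[of _ _ n n n]) (use assms nonneg_mat_pow in auto)

section \<open>Closed walks in a graph\<close>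

lemma adj_matrix_carrier [simp]: "adj_matrix n E \<in> carrier_mat n n"
  unfolding adj_matrix_def by simp

lemma index_adj_matrix:
  "i < n \<Longrightarrow> j < n \<Longrightarrow> adj_matrix n E $$ (i, j) = (if E i j then 1 else 0)"
  unfolding adj_matrix_def by simp

lemma estrada_index_sums:
  "(\<lambda>k. trace (adj_matrix n E ^\<^sub>m k) / fact k) sums estrada_index n E"
proof -
  let ?A = "adj_matrix n E"
  have "trace (map_mat complex_of_real ?A ^\<^sub>m k) = of_real (trace (?A ^\<^sub>m k))" for k
    unfolding trace_def of_real_hom.mat_hom_pow[OF adj_matrix_carrier, symmetric]
    using carrier_matD[OF adj_matrix_carrier[of n E]] by (auto intro!: sum.cong)
  then have "trace (map_mat complex_of_real ?A ^\<^sub>m k) /\<^sub>R fact k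
      = of_real (trace (?A ^\<^sub>m k) / fact k)" for k
    by (simp add: scaleR_conv_of_real divide_inverse mult.commute)
  then have "(\<lambda>k. complex_of_real (trace (?A ^\<^sub>m k) / fact k)) sums (\<Sum>z\<in>#adj_eigenvalues n E. exp z)"
    using sums_trace_pow_exp[of "map_mat complex_of_real ?A" n]
    unfolding adj_eigenvalues_def by simp
  from sums_Re[OF this] show ?thesis
    unfolding estrada_index_def by (simp only: Re_complex_of_real)
qed

lemma nonneg_adj_matrix: "nonneg_mat (adj_matrix n E)"
  unfolding nonneg_mat_def adj_matrix_def by simp

lemma index_adj_pow_nonneg:
  "i < n \<Longrightarrow> j < n \<Longrightarrow> 0 \<le> (adj_matrix n E ^\<^sub>m k) $$ (i, j)"
  using nonneg_mat_pow[OF nonneg_adj_matrix adj_matrix_carrier, of n E k]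
  by (simp add: nonneg_mat_def carrier_matD[OF adj_matrix_carrier])

lemma trace_adj_pow: "trace (adj_matrix n E ^\<^sub>m k) = (\<Sum>i<n. (adj_matrix n E ^\<^sub>m k) $$ (i, i))"
  by (simp add: trace_def carrier_matD[OF adj_matrix_carrier])

lemma adj_matrix_pow_one: "adj_matrix n E ^\<^sub>m 1 = adj_matrix n E"
  using adj_matrix_carrier[of n E] by simp

lemma index_adj_matrix_sq_diag:
  assumes G: "simple_graph n E" and v: "v < n"
  shows "(adj_matrix n E ^\<^sub>m 2) $$ (v, v) = real (degree_of n E v)"
proof -
  let ?A = "adj_matrix n E"
  have "?A ^\<^sub>m 2 = ?A * ?A"
    using carrier_matD[OF adj_matrix_carrier[of n E]] by (simp add: numeral_2_eq_2)
  then have "(?A ^\<^sub>m 2) $$ (v, v) = (\<Sum>k<n. ?A $$ (v, k) * ?A $$ (k, v))"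
    using index_mult_mat_sum[OF adj_matrix_carrier adj_matrix_carrier v v] by simp
  also have "\<dots> = (\<Sum>k<n. if E v k then 1 else 0)"
    using G v by (intro sum.cong) (auto simp: index_adj_matrix simple_graph_def)
  also have "\<dots> = real (degree_of n E v)"
    by (simp add: degree_of_def sum.If_cases Collect_conj_eq lessThan_def Int_commute)
  finally show ?thesis .
qed

lemma index_adj_pow_even_diag_ge:
  assumes G: "simple_graph n E" and v: "v < n"
  shows "real (degree_of n E v) ^ j \<le> (adj_matrix n E ^\<^sub>m (2 * j)) $$ (v, v)"
proof (induction j)
  case 0
  then show ?case using v carrier_matD[OF adj_matrix_carrier[of n E]] by simp
next
  case (Suc j)
  let ?A = "adj_matrix n E"
  have "real (degree_of n E v) ^ Suc j = real (degree_of n E v) ^ j * (?A ^\<^sub>m 2) $$ (v, v)"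
    by (simp add: index_adj_matrix_sq_diag[OF G v])
  also have "\<dots> \<le> (?A ^\<^sub>m (2 * j)) $$ (v, v) * (?A ^\<^sub>m 2) $$ (v, v)"
    by (rule mult_right_mono[OF Suc.IH]) (simp add: index_adj_matrix_sq_diag[OF G v])
  also have "\<dots> \<le> (?A ^\<^sub>m (2 * j + 2)) $$ (v, v)"
    by (rule index_pow_add_ge[OF nonneg_adj_matrix adj_matrix_carrier v v v])
  also have "2 * j + 2 = 2 * Suc j" by simp
  finally show ?case .
qed

lemma index_adj_pow_neighbour_ge:
  assumes G: "simple_graph n E" and v: "v < n" and w: "w < n" "E v w"
  shows "(adj_matrix n E ^\<^sub>m m) $$ (v, v) \<le> (adj_matrix n E ^\<^sub>m (m + 2)) $$ (w, w)"
proof -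
  let ?A = "adj_matrix n E"
  have edge: "?A $$ (w, v) = 1" "?A $$ (v, w) = 1"
    using G v w by (auto simp: index_adj_matrix simple_graph_def)
  have "(?A ^\<^sub>m m) $$ (v, v) = (?A ^\<^sub>m 1) $$ (w, v) * (?A ^\<^sub>m m) $$ (v, v)"
    by (simp only: adj_matrix_pow_one edge mult_1_left)
  also have "\<dots> \<le> (?A ^\<^sub>m (1 + m)) $$ (w, v)"
    by (rule index_pow_add_ge[OF nonneg_adj_matrix adj_matrix_carrier w(1) v v])
  also have "\<dots> = (?A ^\<^sub>m (1 + m)) $$ (w, v) * (?A ^\<^sub>m 1) $$ (v, w)"
    by (simp only: adj_matrix_pow_one edge mult_1_right)
  also have "\<dots> \<le> (?A ^\<^sub>m (1 + m + 1)) $$ (w, w)"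
    by (rule index_pow_add_ge[OF nonneg_adj_matrix adj_matrix_carrier w(1) v w(1)])
  also have "1 + m + 1 = m + 2" by simp
  finally show ?thesis .
qed

lemma trace_adj_pow_even_ge:
  assumes G: "simple_graph n E" and v: "v < n"
  shows "2 * real (degree_of n E v) ^ Suc m \<le> trace (adj_matrix n E ^\<^sub>m (2 * Suc m))"
proof -
  let ?A = "adj_matrix n E ^\<^sub>m (2 * Suc m)"
  let ?d = "real (degree_of n E v)"
  define N where "N = {w. w < n \<and> E v w}"
  have N: "N \<subseteq> {..<n}" "finite N" "v \<notin> N" "card N = degree_of n E v"
    using G v by (auto simp: N_def degree_of_def simple_graph_def)
  have "?d ^ m \<le> ?A $$ (w, w)" if "w \<in> N" for w
  proof -
    have "?d ^ m \<le> (adj_matrix n E ^\<^sub>m (2 * m)) $$ (v, v)"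
      by (rule index_adj_pow_even_diag_ge[OF G v])
    also have "\<dots> \<le> (adj_matrix n E ^\<^sub>m (2 * m + 2)) $$ (w, w)"
      using that by (intro index_adj_pow_neighbour_ge[OF G v]) (auto simp: N_def)
    also have "2 * m + 2 = 2 * Suc m" by simp
    finally show ?thesis .
  qed
  then have "?d * ?d ^ m \<le> (\<Sum>w\<in>N. ?A $$ (w, w))"
    using sum_mono[of N "\<lambda>_. ?d ^ m"] N by simp
  moreover have "?d ^ Suc m \<le> ?A $$ (v, v)"
    by (rule index_adj_pow_even_diag_ge[OF G v])
  ultimately have "2 * ?d ^ Suc m \<le> (\<Sum>w\<in>insert v N. ?A $$ (w, w))"
    using N by simp
  also have "\<dots> \<le> (\<Sum>w<n. ?A $$ (w, w))"
    using N v by (intro sum_mono2) (auto simp del: pow_mat.simps intro: index_adj_pow_nonneg)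
  finally show ?thesis
    unfolding trace_adj_pow .
qed

lemma trace_adj_pow_ge:
  assumes G: "simple_graph n E" and v: "v < n"
  defines "x \<equiv> sqrt (real (degree_of n E v))"
  shows "x ^ k + (- x) ^ k + (if k = 0 then real n - 2 else 0) \<le> trace (adj_matrix n E ^\<^sub>m k)"
proof (cases "odd k")
  case True
  then have "k \<noteq> 0" by (auto dest: odd_pos)
  moreover have "0 \<le> trace (adj_matrix n E ^\<^sub>m k)"
    unfolding trace_adj_pow by (intro sum_nonneg) (simp add: index_adj_pow_nonneg)
  ultimately show ?thesis
    using True by simp
next
  case False
  then obtain j where k: "k = 2 * j" by auto
  show ?thesis
  proof (cases j)
    case 0
    then show ?thesis using k carrier_matD[OF adj_matrix_carrier[of n E]] by (simp add: trace_def)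
  next
    case (Suc m)
    have "x ^ k + (- x) ^ k = 2 * real (degree_of n E v) ^ Suc m"
      using k Suc by (simp add: x_def power_mult)
    then show ?thesis
      using trace_adj_pow_even_ge[OF G v, of m] k Suc by simp
  qed
qed

lemma estrada_index_ge_degree:
  assumes G: "simple_graph n E" and v: "v < n"
  defines "x \<equiv> sqrt (real (degree_of n E v))"
  shows "exp x + exp (- x) + (real n - 2) \<le> estrada_index n E"
proof -
  have "(\<lambda>k. x ^ k / fact k) sums exp x" "(\<lambda>k. (- x) ^ k / fact k) sums exp (- x)"
    using exp_converges[of x] exp_converges[of "- x"] by (simp_all add: divide_inverse mult.commute)
  from sums_add[OF sums_add[OF this] sums_single[of 0 "\<lambda>_. real n - 2"]]
  have lower: "(\<lambda>k. (x ^ k + (- x) ^ k) / fact k + (if k = 0 then real n - 2 else 0))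
      sums (exp x + exp (- x) + (real n - 2))"
    by (simp only: add_divide_distrib)
  have termwise: "(x ^ k + (- x) ^ k) / fact k + (if k = 0 then real n - 2 else 0)
      \<le> trace (adj_matrix n E ^\<^sub>m k) / fact k" for k
    using trace_adj_pow_ge[OF G v, of k] unfolding x_def[symmetric]
    by (cases "k = 0") (simp_all add: divide_right_mono)
  show ?thesis
    using sums_le[OF termwise lower estrada_index_sums] .
qed

lemma add_one_less_exp:
  fixes x :: real
  assumes "x \<noteq> 0"
  shows "1 + x < exp x"
proof (cases "1 + x / 2 < 0")
  case True
  then show ?thesis using exp_gt_zero[of x] by linarith
next
  case False
  have "(1 + x / 2) ^ 2 = 1 + x + x ^ 2 / 4"
    by (simp add: power2_eq_square field_simps)
  moreover have "0 < x ^ 2"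
    using assms by simp
  ultimately have "1 + x < (1 + x / 2) ^ 2"
    by linarith
  also have "\<dots> \<le> exp (x / 2) ^ 2"
    using False exp_ge_add_one_self[of "x / 2"] by (intro power_mono) auto
  also have "\<dots> = exp x"
    by (simp add: power2_eq_square flip: exp_add)
  finally show ?thesis .
qed

lemma max_degree_eq_Max_image: "max_degree n E = Max (degree_of n E ` {..<n})"
  unfolding max_degree_def by (rule arg_cong[where f = Max]) blast

lemma degree_le_max_degree: "i < n \<Longrightarrow> degree_of n E i \<le> max_degree n E"
  unfolding max_degree_eq_Max_image by (rule Max_ge) auto

lemma max_degree_attained:
  assumes "0 < n"
  obtains v where "v < n" "degree_of n E v = max_degree n E"
proof -
  have "max_degree n E \<in> degree_of n E ` {..<n}"
    unfolding max_degree_eq_Max_image using assms by (intro Max_in) auto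
  then show ?thesis using that by auto
qed

lemma degree_pos: "j < n \<Longrightarrow> E i j \<Longrightarrow> 0 < degree_of n E i"
  unfolding degree_of_def by (auto simp: card_gt_0_iff)

theorem mainTheorem2:
  fixes n :: nat and E :: "nat \<Rightarrow> nat \<Rightarrow> bool"
  assumes "simple_graph n E"
    and "\<exists>i<n. \<exists>j<n. E i j"
  shows "estrada_index n E >
           exp (sqrt (real (max_degree n E))) + (real n - 1) - sqrt (real (max_degree n E))"
proof -
  obtain i j where edge: "i < n" "j < n" "E i j" using assms(2) by blast
  from edge(1) have "0 < n" by simp
  then obtain v where v: "v < n" "degree_of n E v = max_degree n E"
    by (rule max_degree_attained)
  define x where "x = sqrt (real (max_degree n E))"
  have "0 < max_degree n E"
    using degree_pos[of j n E i, OF edge(2,3)] degree_le_max_degree[of i n E, OF edge(1)] by linarith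
  then have "1 - x < exp (- x)"
    using add_one_less_exp[of "- x"] by (simp add: x_def)
  moreover have "exp x + exp (- x) + (real n - 2) \<le> estrada_index n E"
    using estrada_index_ge_degree[OF assms(1) v(1)] v(2) by (simp add: x_def)
  ultimately show ?thesis
    unfolding x_def[symmetric] by linarith
qed

end
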